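(* Let $k$ be a field, $A$ a commutative $k$-algebra, $k_n=k[t]/(t^{n+1})$, and $B$ a $k_n$-algebra with an isomorphism $gr\,B\simeq A\otimes_kk_n$ such that $B$ induces a deformation of $D(A)$. Let $\tau:D(B)\to D(A)$ be the residue map and suppose there is a $k$-algebra homomorphism $s:D(A)\to D(B)$ with $\tau\circ s=\mathrm{id}$. Regard $B$ as a left $A\otimes_kk_n$-module via $a\cdot b=s(a)(b)$ for $a\in A\subset D(A)$ (and $t$ acting by multiplication). Then (i) the residue map $\beta:B\to B/tB=A$ is a homomorphism of left $A$-modules; (ii) $B$ is a free $A\otimes_kk_n$-module of rank $1$.
   Context: All differential operators are $k[t]$-linear. For a $k_n$-algebra $C$, $D(C)=\bigcup_mD^m(C)$ with $D^m(C)=\{d\in\operatorname{End}_{k_n}(C): [f_m,\dots,[f_0,d]\dots]=0\ \forall f_i\in C\}$ ($f$ acting by left multiplication, $[f,d]=fd-df$); $D(A)$ is the ring of $k$-linear differential operators on $A$, containing $A$ as left multiplications. $gr$ is taken for the $t$-adic filtration. The natural map $\gamma:gr\,D(B)\to\operatorname{End}_{k_n}(gr\,B)$ sends the class of $d\in t^iD(B)$ to the endomorphism $t^jB/t^{j+1}B\to t^{i+j}B/t^{i+j+1}B$ induced by $d$; it lands in $D(gr\,B)$. $B$ induces a deformation of $D(A)$ if $\gamma:gr\,D(B)\to D(gr\,B)$ is an isomorphism; then, as $D(gr\,B)\simeq D(A\otimes k_n)=D(A)\otimes k_n$, $D(B)$ is an $n$-th order deformation of $D(A)$, and $\tau$ is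 the composite $D(B)\to D(B)/tD(B)\simeq D(A)$ (each operator $d$ is sent to the operator it induces on $B/tB=A$). *)

theory Defs
  imports "HOL-Library.FuncSet"
begin

definition ring_hom_fun :: "('k::ring_1 \<Rightarrow> 'r::ring_1) \<Rightarrow> bool" where
  "ring_hom_fun f \<longleftrightarrow> f 1 = 1 \<and> (\<forall>x y. f (x + y) = f x + f y) \<and> (\<forall>x y. f (x * y) = f x * f y)"

text \<open>B is a k_n-algebra, k_n = k[t]/(t^(n+1)): a ring B with a ring hom k -> B into the
centre and a central element t with t^(n+1) = 0 (universal property of k[t]/(t^(n+1))).\<close>
definition kn_algebra :: "nat \<Rightarrow> ('k::field \<Rightarrow> 'b::ring_1) \<Rightarrow> 'b \<Rightarrow> bool" where
  "kn_algebra n iB t \<longleftrightarrow> ring_hom_fun iB \<and> (\<forall>c x. iB c * x = x * iB c)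
     \<and> (\<forall>x. t * x = x * t) \<and> t ^ Suc n = 0"

text \<open>k_n-linear endomorphisms of C: additive, commuting with the k-action sm and with
multiplication by the element tt (the image of t).\<close>
definition kn_endo :: "'c set \<Rightarrow> ('c \<Rightarrow> 'c \<Rightarrow> 'c) \<Rightarrow> ('c \<Rightarrow> 'c \<Rightarrow> 'c) \<Rightarrow> ('k \<Rightarrow> 'c \<Rightarrow> 'c)
    \<Rightarrow> 'c \<Rightarrow> ('c \<Rightarrow> 'c) set" where
  "kn_endo C add mul sm tt = {d. d \<in> extensional C \<and> (\<forall>x\<in>C. d x \<in> C)
     \<and> (\<forall>x\<in>C. \<forall>y\<in>C. d (add x y) = add (d x) (d y))
     \<and> (\<forall>c. \<forall>x\<in>C. d (sm c x) = sm c (d x))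
     \<and> (\<forall>x\<in>C. d (mul tt x) = mul tt (d x))}"

definition commut :: "('c \<Rightarrow> 'c \<Rightarrow> 'c) \<Rightarrow> ('c \<Rightarrow> 'c \<Rightarrow> 'c) \<Rightarrow> 'c \<Rightarrow> ('c \<Rightarrow> 'c) \<Rightarrow> ('c \<Rightarrow> 'c)" where
  "commut sub mul f d = (\<lambda>x. sub (mul f (d x)) (d (mul f x)))"

fun itcommut :: "('c \<Rightarrow> 'c \<Rightarrow> 'c) \<Rightarrow> ('c \<Rightarrow> 'c \<Rightarrow> 'c) \<Rightarrow> 'c list \<Rightarrow> ('c \<Rightarrow> 'c) \<Rightarrow> ('c \<Rightarrow> 'c)" where
  "itcommut sub mul [] d = d"
| "itcommut sub mul (f # fs) d = itcommut sub mul fs (commut sub mul f d)"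

definition diffops_ord :: "nat \<Rightarrow> 'c set \<Rightarrow> ('c \<Rightarrow> 'c \<Rightarrow> 'c) \<Rightarrow> ('c \<Rightarrow> 'c \<Rightarrow> 'c)
    \<Rightarrow> ('c \<Rightarrow> 'c \<Rightarrow> 'c) \<Rightarrow> 'c \<Rightarrow> ('k \<Rightarrow> 'c \<Rightarrow> 'c) \<Rightarrow> 'c \<Rightarrow> ('c \<Rightarrow> 'c) set" where
  "diffops_ord m C add sub mul z sm tt = {d \<in> kn_endo C add mul sm tt.
     \<forall>fs. length fs = Suc m \<longrightarrow> set fs \<subseteq> C \<longrightarrow> (\<forall>x\<in>C. itcommut sub mul fs d x = z)}"

definition diffops :: "'c set \<Rightarrow> ('c \<Rightarrow> 'c \<Rightarrow> 'c) \<Rightarrow> ('c \<Rightarrow> 'c \<Rightarrow> 'c)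
    \<Rightarrow> ('c \<Rightarrow> 'c \<Rightarrow> 'c) \<Rightarrow> 'c \<Rightarrow> ('k \<Rightarrow> 'c \<Rightarrow> 'c) \<Rightarrow> 'c \<Rightarrow> ('c \<Rightarrow> 'c) set" where
  "diffops C add sub mul z sm tt = (\<Union>m. diffops_ord m C add sub mul z sm tt)"

text \<open>D(A): k-linear differential operators on the commutative k-algebra A
(t := 1 makes the t-linearity condition vacuous).\<close>
definition DA :: "('k \<Rightarrow> 'a::comm_ring_1) \<Rightarrow> ('a \<Rightarrow> 'a) set" where
  "DA iA = diffops UNIV (+) (-) (*) 0 (\<lambda>c x. iA c * x) 1"

definition DB :: "('k \<Rightarrow> 'b::ring_1) \<Rightarrow> 'b \<Rightarrow> ('b \<Rightarrow> 'b) set" where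
  "DB iB t = diffops UNIV (+) (-) (*) 0 (\<lambda>c x. iB c * x) t"

definition tpow_ideal :: "'b::ring_1 \<Rightarrow> nat \<Rightarrow> 'b set" where
  "tpow_ideal t i = range (\<lambda>x. t ^ i * x)"

text \<open>class of x in t^j B / t^(j+1) B\<close>
definition coset :: "'b::ring_1 \<Rightarrow> nat \<Rightarrow> 'b \<Rightarrow> 'b set" where
  "coset t j x = (\<lambda>y. x + y) ` tpow_ideal t (Suc j)"

definition gr_piece :: "'b::ring_1 \<Rightarrow> nat \<Rightarrow> 'b set set" where
  "gr_piece t j = coset t j ` tpow_ideal t j"

text \<open>gr B = direct sum of the pieces (pieces of degree > n are zero since t^(n+1)=0).\<close>
definition grB :: "'b::ring_1 \<Rightarrow> (nat \<Rightarrow> 'b set) set" where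
  "grB t = {g. \<forall>j. g j \<in> gr_piece t j}"

definition rep :: "'b set \<Rightarrow> 'b" where
  "rep X = (SOME x. x \<in> X)"

definition gr_add :: "'b::ring_1 \<Rightarrow> (nat \<Rightarrow> 'b set) \<Rightarrow> (nat \<Rightarrow> 'b set) \<Rightarrow> (nat \<Rightarrow> 'b set)" where
  "gr_add t g h = (\<lambda>j. coset t j (rep (g j) + rep (h j)))"

definition gr_sub :: "'b::ring_1 \<Rightarrow> (nat \<Rightarrow> 'b set) \<Rightarrow> (nat \<Rightarrow> 'b set) \<Rightarrow> (nat \<Rightarrow> 'b set)" where
  "gr_sub t g h = (\<lambda>j. coset t j (rep (g j) - rep (h j)))"

definition gr_mul :: "'b::ring_1 \<Rightarrow> (nat \<Rightarrow> 'b set) \<Rightarrow> (nat \<Rightarrow> 'b set) \<Rightarrow> (nat \<Rightarrow> 'b set)" where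
  "gr_mul t g h = (\<lambda>j. coset t j (\<Sum>p\<le>j. rep (g p) * rep (h (j - p))))"

definition gr_zero :: "'b::ring_1 \<Rightarrow> (nat \<Rightarrow> 'b set)" where
  "gr_zero t = (\<lambda>j. coset t j 0)"

definition gr_one :: "'b::ring_1 \<Rightarrow> (nat \<Rightarrow> 'b set)" where
  "gr_one t = (\<lambda>j. if j = 0 then coset t 0 1 else coset t j 0)"

definition gr_sm :: "('k \<Rightarrow> 'b::ring_1) \<Rightarrow> 'b \<Rightarrow> 'k \<Rightarrow> (nat \<Rightarrow> 'b set) \<Rightarrow> (nat \<Rightarrow> 'b set)" where
  "gr_sm iB t c g = (\<lambda>j. coset t j (iB c * rep (g j)))"

definition gr_t :: "'b::ring_1 \<Rightarrow> (nat \<Rightarrow> 'b set)" where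
  "gr_t t = (\<lambda>j. if j = 1 then coset t 1 t else coset t j 0)"

definition DgrB :: "('k \<Rightarrow> 'b::ring_1) \<Rightarrow> 'b \<Rightarrow> ((nat \<Rightarrow> 'b set) \<Rightarrow> (nat \<Rightarrow> 'b set)) set" where
  "DgrB iB t = diffops (grB t) (gr_add t) (gr_sub t) (gr_mul t) (gr_zero t) (gr_sm iB t) (gr_t t)"

definition tDB :: "('k \<Rightarrow> 'b::ring_1) \<Rightarrow> 'b \<Rightarrow> nat \<Rightarrow> ('b \<Rightarrow> 'b) set" where
  "tDB iB t i = {(\<lambda>x. t ^ i * d x) | d. d \<in> DB iB t}"

definition gamma :: "'b::ring_1 \<Rightarrow> nat \<Rightarrow> ('b \<Rightarrow> 'b) \<Rightarrow> (nat \<Rightarrow> 'b set) \<Rightarrow> (nat \<Rightarrow> 'b set)" where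
  "gamma t i d = restrict (\<lambda>g. \<lambda>j. if j < i then coset t j 0 else coset t j (d (rep (g (j - i))))) (grB t)"

text \<open>gamma on an element (class of d_0,...,d_n) of gr D(B), with d_i in t^i D(B).\<close>
definition Gamma :: "nat \<Rightarrow> 'b::ring_1 \<Rightarrow> (nat \<Rightarrow> 'b \<Rightarrow> 'b) \<Rightarrow> (nat \<Rightarrow> 'b set) \<Rightarrow> (nat \<Rightarrow> 'b set)" where
  "Gamma n t ds = restrict (\<lambda>g. foldr (\<lambda>i acc. gr_add t (gamma t i (ds i) g) acc) [0..<Suc n] (gr_zero t)) (grB t)"

text \<open>B induces a deformation of D(A): gamma : gr D(B) -> D(gr B) is well defined into D(gr B)
and bijective (injective on the quotient gr D(B), and surjective).\<close>
definition induces_deformation :: "nat \<Rightarrow> ('k \<Rightarrow> 'b::ring_1) \<Rightarrow> 'b \<Rightarrow> bool" where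
  "induces_deformation n iB t \<longleftrightarrow>
     (\<forall>ds. (\<forall>i\<le>n. ds i \<in> tDB iB t i) \<longrightarrow> Gamma n t ds \<in> DgrB iB t)
   \<and> (\<forall>ds ds'. (\<forall>i\<le>n. ds i \<in> tDB iB t i) \<longrightarrow> (\<forall>i\<le>n. ds' i \<in> tDB iB t i) \<longrightarrow>
        Gamma n t ds = Gamma n t ds' \<longrightarrow> (\<forall>i\<le>n. (\<lambda>x. ds i x - ds' i x) \<in> tDB iB t (Suc i)))
   \<and> (\<forall>E\<in>DgrB iB t. \<exists>ds. (\<forall>i\<le>n. ds i \<in> tDB iB t i) \<and> Gamma n t ds = E)"

section \<open>A \<otimes>_k k_n = A[t]/(t^(n+1)), elements as coefficient sequences\<close>

definition akn :: "nat \<Rightarrow> (nat \<Rightarrow> 'a::comm_ring_1) set" where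
  "akn n = {p. \<forall>j>n. p j = 0}"

definition ak_add :: "(nat \<Rightarrow> 'a::comm_ring_1) \<Rightarrow> (nat \<Rightarrow> 'a) \<Rightarrow> (nat \<Rightarrow> 'a)" where
  "ak_add p q = (\<lambda>j. p j + q j)"

definition ak_mul :: "nat \<Rightarrow> (nat \<Rightarrow> 'a::comm_ring_1) \<Rightarrow> (nat \<Rightarrow> 'a) \<Rightarrow> (nat \<Rightarrow> 'a)" where
  "ak_mul n p q = (\<lambda>j. if j \<le> n then (\<Sum>i\<le>j. p i * q (j - i)) else 0)"

definition ak_one :: "nat \<Rightarrow> 'a::comm_ring_1" where
  "ak_one = (\<lambda>j. if j = 0 then 1 else 0)"

definition ak_t :: "nat \<Rightarrow> nat \<Rightarrow> 'a::comm_ring_1" where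
  "ak_t n = (\<lambda>j. if j = 1 \<and> 1 \<le> n then 1 else 0)"

definition ak_sm :: "('k \<Rightarrow> 'a::comm_ring_1) \<Rightarrow> 'k \<Rightarrow> (nat \<Rightarrow> 'a) \<Rightarrow> (nat \<Rightarrow> 'a)" where
  "ak_sm iA c p = (\<lambda>j. iA c * p j)"

definition gr_iso :: "nat \<Rightarrow> ('k \<Rightarrow> 'a::comm_ring_1) \<Rightarrow> ('k \<Rightarrow> 'b::ring_1) \<Rightarrow> 'b
    \<Rightarrow> ((nat \<Rightarrow> 'b set) \<Rightarrow> (nat \<Rightarrow> 'a)) \<Rightarrow> bool" where
  "gr_iso n iA iB t theta \<longleftrightarrow> bij_betw theta (grB t) (akn n)
     \<and> (\<forall>g\<in>grB t. \<forall>h\<in>grB t. theta (gr_add t g h) = ak_add (theta g) (theta h)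
                          \<and> theta (gr_mul t g h) = ak_mul n (theta g) (theta h))
     \<and> theta (gr_one t) = ak_one
     \<and> theta (gr_t t) = ak_t n
     \<and> (\<forall>c. \<forall>g\<in>grB t. theta (gr_sm iB t c g) = ak_sm iA c (theta g))"

text \<open>beta : B -> B/tB = gr_0 B = (gr B)/t(gr B) = A, the identification induced by theta.\<close>
definition residue :: "'b::ring_1 \<Rightarrow> ((nat \<Rightarrow> 'b set) \<Rightarrow> (nat \<Rightarrow> 'a)) \<Rightarrow> 'b \<Rightarrow> 'a" where
  "residue t theta b = theta (\<lambda>j. if j = 0 then coset t 0 b else coset t j 0) 0"

text \<open>tau : D(B) -> D(A), d goes to the operator it induces on B/tB = A.\<close>
definition tau :: "'b::ring_1 \<Rightarrow> ((nat \<Rightarrow> 'b set) \<Rightarrow> (nat \<Rightarrow> 'a)) \<Rightarrow> ('b \<Rightarrow> 'b) \<Rightarrow> ('a \<Rightarrow> 'a)" where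
  "tau t theta d = (\<lambda>a. residue t theta (d (SOME b. residue t theta b = a)))"

text \<open>s : D(A) -> D(B) a k-algebra homomorphism (composition as product).\<close>
definition kalg_hom :: "('k \<Rightarrow> 'a::comm_ring_1) \<Rightarrow> ('k \<Rightarrow> 'b::ring_1) \<Rightarrow> 'b
    \<Rightarrow> (('a \<Rightarrow> 'a) \<Rightarrow> ('b \<Rightarrow> 'b)) \<Rightarrow> bool" where
  "kalg_hom iA iB t s \<longleftrightarrow> (\<forall>d\<in>DA iA. s d \<in> DB iB t)
     \<and> (\<forall>d1\<in>DA iA. \<forall>d2\<in>DA iA. s (d1 \<circ> d2) = s d1 \<circ> s d2
                            \<and> s (\<lambda>x. d1 x + d2 x) = (\<lambda>x. s d1 x + s d2 x))
     \<and> s id = id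
     \<and> (\<forall>c. \<forall>d\<in>DA iA. s (\<lambda>x. iA c * d x) = (\<lambda>x. iB c * s d x))"

definition bmod :: "nat \<Rightarrow> 'b::ring_1 \<Rightarrow> (('a::comm_ring_1 \<Rightarrow> 'a) \<Rightarrow> ('b \<Rightarrow> 'b))
    \<Rightarrow> (nat \<Rightarrow> 'a) \<Rightarrow> 'b \<Rightarrow> 'b" where
  "bmod n t s p b = (\<Sum>j\<le>n. t ^ j * s (\<lambda>x. p j * x) b)"

end

theory Submission
  imports Defs
begin

(* Write R for the residue map B -> B/tB = A. It is additive with kernel tB, and the graded
   isomorphism (multiplication by t is the shift on A[t]/(t^(n+1))) shows that t^k c = 0 with
   k <= n forces R c = 0. Every s(a) is additive and t-linear, so it preserves tB and
   R (s(a) b) = tau (s(a)) (R b) = a R b; this is (i).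
   For (ii) take the generator 1 and put S a = s(a)(1), an additive section of R. Then every
   b is uniquely a sum of t^j S(a_j), j <= n: existence by successive approximation modulo
   t^k, uniqueness by applying R after cancelling the power of t in front of the lowest
   nonzero coefficient. *)

section \<open>The t-adic filtration\<close>

lemma tpow_ideal_iff: "x \<in> tpow_ideal t j \<longleftrightarrow> (\<exists>y. x = t ^ j * y)"
  unfolding tpow_ideal_def by auto

lemma tpow_ideal_zero [simp]: "(0::'b::ring_1) \<in> tpow_ideal t j"
  unfolding tpow_ideal_iff by (metis mult_zero_right)

lemma tpow_ideal_add:
  "x \<in> tpow_ideal t j \<Longrightarrow> y \<in> tpow_ideal t j \<Longrightarrow> (x::'b::ring_1) + y \<in> tpow_ideal t j"
  unfolding tpow_ideal_iff by (metis distrib_left)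

lemma tpow_ideal_diff:
  "x \<in> tpow_ideal t j \<Longrightarrow> y \<in> tpow_ideal t j \<Longrightarrow> (x::'b::ring_1) - y \<in> tpow_ideal t j"
  unfolding tpow_ideal_iff by (metis right_diff_distrib)

lemma tpow_ideal_SucD: "(x::'b::ring_1) \<in> tpow_ideal t (Suc j) \<Longrightarrow> x \<in> tpow_ideal t j"
  unfolding tpow_ideal_iff by (metis mult.assoc power_Suc2)

lemma tpow_ideal_mult_right: "(x::'b::ring_1) \<in> tpow_ideal t j \<Longrightarrow> x * z \<in> tpow_ideal t j"
  unfolding tpow_ideal_iff by (auto simp: mult.assoc)

lemma tpow_ideal_mult:
  fixes t :: "'b::ring_1"
  assumes central: "\<forall>z. t * z = z * t"
    and "x \<in> tpow_ideal t i" "y \<in> tpow_ideal t j"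
  shows "x * y \<in> tpow_ideal t (i + j)"
proof -
  obtain a b where "x = t ^ i * a" "y = t ^ j * b"
    using assms(2,3) unfolding tpow_ideal_iff by blast
  moreover have "a * t ^ j = t ^ j * a"
    using power_commuting_commutes[of t a j] central by simp
  ultimately have "x * y = t ^ (i + j) * (a * b)"
    by (metis mult.assoc power_add)
  then show ?thesis unfolding tpow_ideal_iff by blast
qed

lemma tpow_ideal_sum:
  "(\<And>a. a \<in> A \<Longrightarrow> f a \<in> tpow_ideal t j) \<Longrightarrow> (sum f A :: 'b::ring_1) \<in> tpow_ideal t j"
  by (induction A rule: infinite_finite_induct) (simp_all add: tpow_ideal_add)

lemma coset_self: "(x::'b::ring_1) \<in> coset t j x"
  unfolding coset_def using tpow_ideal_zero by force

lemma coset_eq_iff: "coset t j x = coset t j (y::'b::ring_1) \<longleftrightarrow> x - y \<in> tpow_ideal t (Suc j)"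
proof
  assume "coset t j x = coset t j y"
  then have "x \<in> coset t j y" using coset_self by metis
  then show "x - y \<in> tpow_ideal t (Suc j)" unfolding coset_def by auto
next
  have subset: "coset t j a \<subseteq> coset t j b" if "a - b \<in> tpow_ideal t (Suc j)" for a b :: 'b
  proof
    fix w assume "w \<in> coset t j a"
    then obtain z where z: "z \<in> tpow_ideal t (Suc j)" "w = a + z" unfolding coset_def by auto
    then have "w = b + ((a - b) + z)" by simp
    moreover have "(a - b) + z \<in> tpow_ideal t (Suc j)" using tpow_ideal_add that z(1) by blast
    ultimately show "w \<in> coset t j b" unfolding coset_def by blast
  qed
  assume "x - y \<in> tpow_ideal t (Suc j)"
  moreover from this have "y - x \<in> tpow_ideal t (Suc j)"
    using tpow_ideal_diff[OF tpow_ideal_zero] by fastforce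
  ultimately show "coset t j x = coset t j y" using subset by blast
qed

lemma rep_coset: "rep (coset t j x) - (x::'b::ring_1) \<in> tpow_ideal t (Suc j)"
proof -
  have "rep (coset t j x) \<in> coset t j x" unfolding rep_def by (rule someI, rule coset_self)
  then show ?thesis unfolding coset_def by auto
qed

lemma coset_rep_add:
  "coset t j (rep (coset t j x) + rep (coset t j y)) = coset t j ((x::'b::ring_1) + y)"
proof -
  have "rep (coset t j x) + rep (coset t j y) - (x + y)
      = (rep (coset t j x) - x) + (rep (coset t j y) - y)" by simp
  then show ?thesis unfolding coset_eq_iff by (metis rep_coset tpow_ideal_add)
qed

lemma rep_in_tpow_ideal: "g \<in> grB t \<Longrightarrow> rep (g j) \<in> tpow_ideal t j"
proof -
  assume "g \<in> grB t"
  then obtain y where y: "y \<in> tpow_ideal t j" "g j = coset t j y"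
    unfolding grB_def gr_piece_def by blast
  have "rep (g j) = (rep (g j) - y) + y" by simp
  moreover have "rep (g j) - y \<in> tpow_ideal t j" using rep_coset[of t j y] y(2) tpow_ideal_SucD by metis
  ultimately show ?thesis using tpow_ideal_add y(1) by metis
qed

lemma gr_mul_in_grB:
  assumes central: "\<forall>z. t * z = z * (t::'b::ring_1)" and "g \<in> grB t" "h \<in> grB t"
  shows "gr_mul t g h \<in> grB t"
proof -
  have "(\<Sum>p\<le>j. rep (g p) * rep (h (j - p))) \<in> tpow_ideal t j" for j
  proof (rule tpow_ideal_sum)
    fix p assume "p \<in> {..j}"
    then show "rep (g p) * rep (h (j - p)) \<in> tpow_ideal t j"
      using tpow_ideal_mult[OF central rep_in_tpow_ideal rep_in_tpow_ideal, OF assms(2,3)]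
      by (metis atMost_iff le_add_diff_inverse)
  qed
  then show ?thesis unfolding grB_def gr_piece_def gr_mul_def by blast
qed

section \<open>Homogeneous elements of gr B\<close>

definition gr_homog :: "'b::ring_1 \<Rightarrow> nat \<Rightarrow> 'b \<Rightarrow> (nat \<Rightarrow> 'b set)" where
  "gr_homog t j x = (\<lambda>i. if i = j then coset t j x else coset t i 0)"

lemma gr_homog_in_grB: "x \<in> tpow_ideal t j \<Longrightarrow> gr_homog t j x \<in> grB t"
  unfolding grB_def gr_homog_def gr_piece_def by auto

lemma gr_homog_cong: "x - y \<in> tpow_ideal t (Suc j) \<Longrightarrow> gr_homog t j x = gr_homog t j (y::'b::ring_1)"
  unfolding gr_homog_def using coset_eq_iff by metis

lemma gr_homog_zero: "gr_homog t j 0 = gr_zero (t::'b::ring_1)"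
  unfolding gr_homog_def gr_zero_def by (auto simp: fun_eq_iff)

lemma gr_add_gr_homog: "gr_add t (gr_homog t j x) (gr_homog t j y) = gr_homog t j ((x::'b::ring_1) + y)"
  unfolding gr_add_def gr_homog_def fun_eq_iff using coset_rep_add[of t _ 0 0] by (simp add: coset_rep_add)

lemma rep_gr_homog_other: "i \<noteq> j \<Longrightarrow> rep (gr_homog t j x i) \<in> tpow_ideal t (Suc i)"
  unfolding gr_homog_def using rep_coset[of t i 0] by simp

lemma rep_gr_homog_same: "rep (gr_homog t j x j) - x \<in> tpow_ideal t (Suc j)"
  unfolding gr_homog_def using rep_coset[of t j x] by simp

lemma rep_gr_homog_mult_off_diagonal:
  fixes t :: "'b::ring_1"
  assumes central: "\<forall>z. t * z = z * t"
    and x: "x \<in> tpow_ideal t i" and y: "y \<in> tpow_ideal t j"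
    and "p \<le> m" and "p \<noteq> i \<or> m - p \<noteq> j"
  shows "rep (gr_homog t i x p) * rep (gr_homog t j y (m - p)) \<in> tpow_ideal t (Suc m)"
proof (cases "p = i")
  case False
  then have "rep (gr_homog t i x p) \<in> tpow_ideal t (Suc p)" using rep_gr_homog_other by metis
  moreover have "rep (gr_homog t j y (m - p)) \<in> tpow_ideal t (m - p)"
    using rep_in_tpow_ideal gr_homog_in_grB y by blast
  moreover have "Suc p + (m - p) = Suc m" using assms(4) by simp
  ultimately show ?thesis using tpow_ideal_mult[OF central] by metis
next
  case True
  then have "rep (gr_homog t j y (m - p)) \<in> tpow_ideal t (Suc (m - p))"
    using rep_gr_homog_other assms(5) by metis
  moreover have "rep (gr_homog t i x p) \<in> tpow_ideal t p"
    using rep_in_tpow_ideal gr_homog_in_grB x by blast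
  moreover have "p + Suc (m - p) = Suc m" using assms(4) by simp
  ultimately show ?thesis using tpow_ideal_mult[OF central] by metis
qed

lemma rep_gr_homog_mult_diagonal:
  fixes t :: "'b::ring_1"
  assumes central: "\<forall>z. t * z = z * t"
    and x: "x \<in> tpow_ideal t i" and y: "y \<in> tpow_ideal t j"
  shows "rep (gr_homog t i x i) * rep (gr_homog t j y j) - x * y \<in> tpow_ideal t (Suc (i + j))"
proof -
  define u v where "u = rep (gr_homog t i x i) - x" and "v = rep (gr_homog t j y j) - y"
  have u: "u \<in> tpow_ideal t (Suc i)" and v: "v \<in> tpow_ideal t (Suc j)"
    unfolding u_def v_def using rep_gr_homog_same by blast+
  have b: "rep (gr_homog t j y j) \<in> tpow_ideal t j"
    using rep_in_tpow_ideal gr_homog_in_grB y by blast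
  have "rep (gr_homog t i x i) * rep (gr_homog t j y j) - x * y = u * rep (gr_homog t j y j) + x * v"
    unfolding u_def v_def by (simp add: algebra_simps)
  moreover have "u * rep (gr_homog t j y j) \<in> tpow_ideal t (Suc (i + j))"
    using tpow_ideal_mult[OF central u b] by simp
  moreover have "x * v \<in> tpow_ideal t (Suc (i + j))"
    using tpow_ideal_mult[OF central x v] by simp
  ultimately show ?thesis using tpow_ideal_add by simp
qed

lemma gr_mul_gr_homog:
  fixes t :: "'b::ring_1"
  assumes central: "\<forall>z. t * z = z * t"
    and x: "x \<in> tpow_ideal t i" and y: "y \<in> tpow_ideal t j"
  shows "gr_mul t (gr_homog t i x) (gr_homog t j y) = gr_homog t (i + j) (x * y)"
proof
  fix m
  define c where "c p = rep (gr_homog t i x p) * rep (gr_homog t j y (m - p))" for p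
  have off_diagonal: "c p \<in> tpow_ideal t (Suc m)" if "p \<le> m" "p \<noteq> i \<or> m - p \<noteq> j" for p
    unfolding c_def using rep_gr_homog_mult_off_diagonal[OF central x y that] .
  have lhs: "gr_mul t (gr_homog t i x) (gr_homog t j y) m = coset t m (\<Sum>p\<le>m. c p)"
    unfolding gr_mul_def c_def by simp
  show "gr_mul t (gr_homog t i x) (gr_homog t j y) m = gr_homog t (i + j) (x * y) m"
  proof (cases "m = i + j")
    case False
    then have "(\<Sum>p\<le>m. c p) \<in> tpow_ideal t (Suc m)"
      by (intro tpow_ideal_sum off_diagonal) auto
    then show ?thesis unfolding lhs using False by (simp add: gr_homog_def coset_eq_iff)
  next
    case True
    have rest: "(\<Sum>p\<in>{..m} - {i}. c p) \<in> tpow_ideal t (Suc m)"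
      by (intro tpow_ideal_sum off_diagonal) auto
    have main: "c i - x * y \<in> tpow_ideal t (Suc m)"
      unfolding c_def using rep_gr_homog_mult_diagonal[OF central x y] True by simp
    have "(\<Sum>p\<le>m. c p) = c i + (\<Sum>p\<in>{..m} - {i}. c p)"
      by (rule sum.remove[OF finite_atMost]) (simp add: True)
    then have regroup: "(\<Sum>p\<le>m. c p) - x * y = (c i - x * y) + (\<Sum>p\<in>{..m} - {i}. c p)"
      by simp
    have "(\<Sum>p\<le>m. c p) - x * y \<in> tpow_ideal t (Suc m)"
      unfolding regroup by (rule tpow_ideal_add[OF main rest])
    then show ?thesis unfolding lhs using True by (simp add: gr_homog_def coset_eq_iff)
  qed
qed

lemma ak_mul_ak_t: "ak_mul n (ak_t n) p = (\<lambda>j. if 1 \<le> j \<and> j \<le> n then p (j - 1) else 0)"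
proof
  fix j
  show "ak_mul n (ak_t n) p j = (if 1 \<le> j \<and> j \<le> n then p (j - 1) else 0)"
  proof (cases "j \<le> n")
    case True
    have "(\<Sum>i\<le>j. ak_t n i * p (j - i)) = (\<Sum>i\<le>j. if i = 1 then p (j - 1) else 0)"
      by (rule sum.cong) (use True in \<open>auto simp: ak_t_def\<close>)
    then show ?thesis using True by (simp add: ak_mul_def)
  qed (simp add: ak_mul_def)
qed

section \<open>Expansions in powers of t\<close>

definition tpow_expansion :: "nat \<Rightarrow> 'b::ring_1 \<Rightarrow> ('a \<Rightarrow> 'b) \<Rightarrow> (nat \<Rightarrow> 'a) \<Rightarrow> 'b" where
  "tpow_expansion n t S p = (\<Sum>j\<le>n. t ^ j * S (p j))"

lemma tpow_expansion_leading_term: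
  fixes t :: "'b::ring_1"
  assumes "k \<le> m" and "\<forall>j<k. X j = 0"
  shows "\<exists>w. (\<Sum>j\<le>m. t ^ j * X j) = t ^ k * (X k + t * w)"
  using assms(1)
proof (induction m rule: dec_induct)
  case base
  have "(\<Sum>j\<le>k. t ^ j * X j) = t ^ k * X k"
    using assms(2) by (simp add: lessThan_Suc_atMost[symmetric])
  then show ?case by (intro exI[of _ 0]) simp
next
  case (step m)
  then obtain w where w: "(\<Sum>j\<le>m. t ^ j * X j) = t ^ k * (X k + t * w)" by blast
  have "t ^ Suc m = t ^ (k + 1 + (m - k))" using step(1) by simp
  also have "\<dots> = t ^ k * t * t ^ (m - k)" by (simp only: power_add power_one_right)
  finally have "t ^ Suc m = t ^ k * t * t ^ (m - k)" .
  then have "(\<Sum>j\<le>Suc m. t ^ j * X j) = t ^ k * (X k + t * (w + t ^ (m - k) * X (Suc m)))"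
    using w by (simp add: algebra_simps)
  then show ?case by blast
qed

lemma tpow_expansion_update:
  fixes t :: "'b::ring_1"
  assumes "k \<le> n" and "p k = 0" and "S 0 = 0"
  shows "tpow_expansion n t S (p(k := a)) = tpow_expansion n t S p + t ^ k * S a"
proof -
  have "tpow_expansion n t S (p(k := a))
      = (\<Sum>j\<le>n. t ^ j * S (p j) + (if j = k then t ^ k * S a else 0))"
    unfolding tpow_expansion_def by (rule sum.cong) (use assms(2,3) in auto)
  then show ?thesis
    using assms(1) by (simp add: sum.distrib tpow_expansion_def)
qed

lemma tpow_expansion_surj:
  fixes t :: "'b::ring_1" and R :: "'b \<Rightarrow> 'a::comm_ring_1"
  assumes nilpotent: "t ^ Suc n = 0"
    and R_add: "\<And>x y. R (x + y) = R x + R y"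
    and R_kernel: "\<And>x. R x = 0 \<Longrightarrow> \<exists>y. x = t * y"
    and S_add: "\<And>a b. S (a + b) = S a + S b"
    and R_S: "\<And>a. R (S a) = a"
  shows "tpow_expansion n t S ` akn n = UNIV"
proof -
  have S0: "S 0 = 0" using S_add[of 0 0] by simp
  have "\<exists>p\<in>akn n. (\<forall>j\<ge>k. p j = 0) \<and> (\<exists>c. b = tpow_expansion n t S p + t ^ k * c)"
    if "k \<le> Suc n" for k b
    using that
  proof (induction k)
    case 0
    have "(\<lambda>_. 0) \<in> akn n" and "tpow_expansion n t S (\<lambda>_. 0) = 0"
      by (simp_all add: akn_def tpow_expansion_def S0)
    then show ?case by force
  next
    case (Suc k)
    then obtain p c where p: "p \<in> akn n" "\<forall>j\<ge>k. p j = 0"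
      and b: "b = tpow_expansion n t S p + t ^ k * c" by auto
    define a where "a = R c"
    have "R (c - S a) = 0" using R_add[of "c - S a" "S a"] R_S unfolding a_def by simp
    then obtain c' where c': "c - S a = t * c'" using R_kernel by blast
    have k: "k \<le> n" using Suc.prems by simp
    have "p(k := a) \<in> akn n" and "\<forall>j\<ge>Suc k. (p(k := a)) j = 0"
      using p k unfolding akn_def by auto
    moreover have "b = tpow_expansion n t S (p(k := a)) + t ^ Suc k * c'"
    proof -
      have pk: "p k = 0" using p(2) by simp
      have "c = S a + t * c'" using c' by (simp add: algebra_simps)
      then have "t ^ k * c = t ^ k * S a + t ^ Suc k * c'"
        by (simp add: distrib_left mult.assoc power_Suc2 del: power_Suc)
      then show ?thesis using b tpow_expansion_update[where p = p and S = S, OF k pk S0] by (simp add: add.assoc)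
    qed
    ultimately show ?case by blast
  qed
  from this[of "Suc n"] have "b \<in> tpow_expansion n t S ` akn n" for b
    using nilpotent by force
  then show ?thesis by blast
qed

lemma tpow_expansion_inj:
  fixes t :: "'b::ring_1" and R :: "'b \<Rightarrow> 'a::comm_ring_1"
  assumes R_add: "\<And>x y. R (x + y) = R x + R y"
    and R_t_mult: "\<And>y. R (t * y) = 0"
    and R_annihilator: "\<And>k c. k \<le> n \<Longrightarrow> t ^ k * c = 0 \<Longrightarrow> R c = 0"
    and S_add: "\<And>a b. S (a + b) = S a + S b"
    and R_S: "\<And>a. R (S a) = a"
  shows "inj_on (tpow_expansion n t S) (akn n)"
proof (rule inj_onI)
  fix p q assume p: "p \<in> akn n" and q: "q \<in> akn n"
    and eq: "tpow_expansion n t S p = tpow_expansion n t S q"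
  have S0: "S 0 = 0" using S_add[of 0 0] by simp
  have S_diff: "S (a - b) = S a - S b" for a b using S_add[of "a - b" b] by simp
  define r where "r j = p j - q j" for j
  have r0: "tpow_expansion n t S r = 0"
    using eq unfolding r_def tpow_expansion_def S_diff right_diff_distrib sum_subtractf by simp
  have "\<forall>j<k. r j = 0" if "k \<le> Suc n" for k
    using that
  proof (induction k)
    case (Suc k)
    then have k: "k \<le> n" and below: "\<forall>j<k. S (r j) = 0" using S0 by auto
    obtain w where "tpow_expansion n t S r = t ^ k * (S (r k) + t * w)"
      using tpow_expansion_leading_term[OF k below] unfolding tpow_expansion_def by blast
    then have "R (S (r k) + t * w) = 0" using R_annihilator[OF k] r0 by simp
    then have "r k = 0" using R_add R_t_mult R_S by simp
    then show ?case using Suc less_Suc_eq by auto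
  qed simp
  from this[of "Suc n"] have low: "p j = q j" if "j \<le> n" for j
    using that unfolding r_def by auto
  show "p = q"
  proof
    fix j show "p j = q j" using p q low unfolding akn_def by (cases "j \<le> n") auto
  qed
qed

section \<open>The residue map\<close>

lemma DB_add: "d \<in> DB iB t \<Longrightarrow> d (x + y) = d x + d y"
  unfolding DB_def diffops_def diffops_ord_def kn_endo_def by blast

lemma DB_mult_t: "d \<in> DB iB t \<Longrightarrow> d (t * x) = t * d x"
  unfolding DB_def diffops_def diffops_ord_def kn_endo_def by blast

lemma mult_left_in_DA: "(\<lambda>x. a * x) \<in> DA iA"
proof -
  have "(\<lambda>x. a * x) \<in> diffops_ord 0 UNIV (+) (-) (*) 0 (\<lambda>c x. iA c * x) 1"
    unfolding diffops_ord_def kn_endo_def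
  proof (intro CollectI conjI ballI allI impI)
    fix fs :: "'a list" and x assume "length fs = Suc 0"
    then obtain f where "fs = [f]" by (auto simp: length_Suc_conv)
    then show "itcommut (-) (*) fs (\<lambda>x. a * x) x = 0" by (simp add: commut_def ac_simps)
  qed (auto simp: extensional_def algebra_simps)
  then show ?thesis unfolding DA_def diffops_def by blast
qed

lemma kalg_hom_mult_add:
  assumes "kalg_hom iA iB t s"
  shows "s (\<lambda>x. (a + b) * x) y = s (\<lambda>x. a * x) y + s (\<lambda>x. b * x) y"
proof -
  have "s (\<lambda>x. a * x + b * x) = (\<lambda>x. s (\<lambda>x. a * x) x + s (\<lambda>x. b * x) x)"
    using assms mult_left_in_DA unfolding kalg_hom_def by blast
  then show ?thesis by (simp add: distrib_right)
qed

locale kn_algebra_with_gr_iso =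
  fixes n :: nat and iA :: "'k::field \<Rightarrow> 'a::comm_ring_1" and iB :: "'k \<Rightarrow> 'b::ring_1"
    and t :: 'b and theta :: "(nat \<Rightarrow> 'b set) \<Rightarrow> (nat \<Rightarrow> 'a)"
  assumes kn_alg: "kn_algebra n iB t" and iso: "gr_iso n iA iB t theta"
begin

lemma t_central: "\<forall>z. t * z = z * t"
  using kn_alg unfolding kn_algebra_def by blast

lemma t_nilpotent: "t ^ Suc n = 0"
  using kn_alg unfolding kn_algebra_def by blast

lemma theta_add: "g \<in> grB t \<Longrightarrow> h \<in> grB t \<Longrightarrow> theta (gr_add t g h) = ak_add (theta g) (theta h)"
  using iso unfolding gr_iso_def by blast

lemma theta_mul: "g \<in> grB t \<Longrightarrow> h \<in> grB t \<Longrightarrow> theta (gr_mul t g h) = ak_mul n (theta g) (theta h)"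
  using iso unfolding gr_iso_def by blast

lemma theta_inj: "inj_on theta (grB t)" and theta_image: "theta ` grB t = akn n"
  using iso unfolding gr_iso_def bij_betw_def by blast+

lemma gr_t_eq: "gr_t t = gr_homog t 1 t"
  unfolding gr_t_def gr_homog_def by simp

lemma gr_t_in_grB: "gr_t t \<in> grB t"
  unfolding gr_t_eq by (rule gr_homog_in_grB) (metis tpow_ideal_iff power_one_right mult_1_right)

lemma gr_homog_0_in_grB: "gr_homog t 0 x \<in> grB t"
  by (rule gr_homog_in_grB) (simp add: tpow_ideal_iff)

lemma residue_eq: "residue t theta x = theta (gr_homog t 0 x) 0"
  unfolding residue_def gr_homog_def by simp

lemma theta_gr_zero: "theta (gr_zero t) = (\<lambda>_. 0)"
proof
  fix j
  have z: "gr_zero t \<in> grB t" and "gr_add t (gr_zero t) (gr_zero t) = gr_zero t"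
    using gr_homog_0_in_grB[of 0] gr_add_gr_homog[of t 0 0 0] by (simp_all add: gr_homog_zero)
  then have "theta (gr_zero t) j = theta (gr_zero t) j + theta (gr_zero t) j"
    using theta_add[OF z z] by (metis ak_add_def)
  then show "theta (gr_zero t) j = 0" by simp
qed

lemma residue_add: "residue t theta (x + y) = residue t theta x + residue t theta y"
  unfolding residue_eq gr_add_gr_homog[symmetric]
  by (simp add: theta_add gr_homog_0_in_grB ak_add_def)

lemma residue_diff: "residue t theta (x - y) = residue t theta x - residue t theta y"
  using residue_add[of "x - y" y] by simp

lemma residue_one: "residue t theta 1 = 1"
proof -
  have "gr_homog t 0 1 = gr_one t" unfolding gr_homog_def gr_one_def by simp
  then show ?thesis using iso by (simp add: residue_eq gr_iso_def ak_one_def)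
qed

lemma theta_gr_mul_gr_t:
  "h \<in> grB t \<Longrightarrow> theta (gr_mul t (gr_t t) h) = (\<lambda>j. if 1 \<le> j \<and> j \<le> n then theta h (j - 1) else 0)"
  using iso by (simp add: theta_mul gr_t_in_grB gr_iso_def ak_mul_ak_t)

text \<open>If the class of x in degree 0 has vanishing 0-th coordinate, theta identifies it with
  the class of t times some h; comparing degree-0 components puts x into tB.\<close>
lemma residue_eq_0_iff: "residue t theta x = 0 \<longleftrightarrow> (\<exists>y. x = t * y)"
proof
  assume "\<exists>y. x = t * y"
  then have "gr_homog t 0 x = gr_zero t"
    using gr_homog_cong[of x 0 t 0] by (auto simp: gr_homog_zero tpow_ideal_iff)
  then show "residue t theta x = 0" by (simp add: residue_eq theta_gr_zero)
next
  assume x: "residue t theta x = 0"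
  define p where "p = theta (gr_homog t 0 x)"
  have p: "p \<in> akn n" and p0: "p 0 = 0"
    unfolding p_def using theta_image gr_homog_0_in_grB x residue_eq by auto
  then have "(\<lambda>j. p (Suc j)) \<in> akn n" unfolding akn_def by auto
  then obtain h where h: "h \<in> grB t" and theta_h: "theta h = (\<lambda>j. p (Suc j))"
    using theta_image by (metis imageE)
  have "theta (gr_mul t (gr_t t) h) j = p j" for j
    using p p0 unfolding theta_gr_mul_gr_t[OF h] theta_h akn_def by (cases j) auto
  then have "gr_mul t (gr_t t) h = gr_homog t 0 x"
    using theta_inj gr_mul_in_grB[OF t_central gr_t_in_grB h] gr_homog_0_in_grB
    unfolding p_def inj_on_def by blast
  then have "gr_mul t (gr_t t) h 0 = gr_homog t 0 x 0" by simp
  then have "coset t 0 (rep (gr_t t 0) * rep (h 0)) = coset t 0 x"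
    unfolding gr_mul_def gr_homog_def by simp
  then have "rep (gr_t t 0) * rep (h 0) - x \<in> tpow_ideal t 1"
    using coset_eq_iff by (metis One_nat_def)
  moreover have "rep (gr_t t 0) * rep (h 0) \<in> tpow_ideal t 1"
    using rep_gr_homog_other[of 0 1 t t] unfolding gr_t_eq by (simp add: tpow_ideal_mult_right)
  ultimately have "x \<in> tpow_ideal t 1"
    using tpow_ideal_diff by fastforce
  then show "\<exists>y. x = t * y" by (simp add: tpow_ideal_iff)
qed

lemma theta_gr_homog_tpow:
  "theta (gr_homog t k (t ^ k * c)) j
     = (if k \<le> j \<and> j \<le> n then theta (gr_homog t 0 c) (j - k) else 0)"
proof (induction k arbitrary: j)
  case 0
  have "theta (gr_homog t 0 c) \<in> akn n" using theta_image gr_homog_0_in_grB by blast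
  then show ?case unfolding akn_def by auto
next
  case (Suc k)
  have "gr_homog t (Suc k) (t ^ Suc k * c) = gr_mul t (gr_t t) (gr_homog t k (t ^ k * c))"
    unfolding gr_t_eq
    by (subst gr_mul_gr_homog[OF t_central]) (auto simp: tpow_ideal_iff mult.assoc intro: exI[of _ 1])
  moreover have "gr_homog t k (t ^ k * c) \<in> grB t"
    by (rule gr_homog_in_grB) (auto simp: tpow_ideal_iff)
  ultimately show ?case
    using Suc.IH by (auto simp: theta_gr_mul_gr_t)
qed

lemma residue_eq_0_if_tpow_mult_eq_0:
  assumes "k \<le> n" and "t ^ k * c = 0"
  shows "residue t theta c = 0"
  using theta_gr_homog_tpow[of k c k] assms
  by (simp add: residue_eq gr_homog_zero theta_gr_zero)

lemma residue_diffop: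
  assumes d: "d \<in> DB iB t"
  shows "residue t theta (d b) = tau t theta d (residue t theta b)"
proof -
  define b' where "b' = (SOME b'. residue t theta b' = residue t theta b)"
  have "residue t theta b' = residue t theta b" unfolding b'_def by (rule someI) (rule refl)
  then have "residue t theta (b - b') = 0" by (simp add: residue_diff)
  then obtain w where "b - b' = t * w" using residue_eq_0_iff by blast
  then have "b = b' + t * w" by (simp add: algebra_simps)
  then have "d b = d b' + t * d w" using DB_add[OF d] DB_mult_t[OF d] by metis
  then show ?thesis
    unfolding tau_def b'_def[symmetric] using residue_add residue_eq_0_iff by auto
qed

lemma residue_mult_section:
  assumes "kalg_hom iA iB t s" and "\<forall>d\<in>DA iA. tau t theta (s d) = d"
  shows "residue t theta (s (\<lambda>x. a * x) b) = a * residue t theta b"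
proof -
  have "s (\<lambda>x. a * x) \<in> DB iB t" using assms(1) mult_left_in_DA unfolding kalg_hom_def by blast
  then have "residue t theta (s (\<lambda>x. a * x) b) = tau t theta (s (\<lambda>x. a * x)) (residue t theta b)"
    by (rule residue_diffop)
  then show ?thesis using assms(2) mult_left_in_DA[of a iA] by simp
qed

lemma tpow_expansion_bij_of_section:
  assumes S_add: "\<And>a b. S (a + b) = S a + S b"
    and residue_S: "\<And>a. residue t theta (S a) = a"
  shows "bij_betw (tpow_expansion n t S) (akn n) UNIV"
  unfolding bij_betw_def
proof
  show "inj_on (tpow_expansion n t S) (akn n)"
    by (rule tpow_expansion_inj[where R = "residue t theta"])
      (use residue_add residue_eq_0_iff residue_eq_0_if_tpow_mult_eq_0 S_add residue_S in blast)+
  show "tpow_expansion n t S ` akn n = UNIV"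
    by (rule tpow_expansion_surj[where R = "residue t theta"])
      (use t_nilpotent residue_add residue_eq_0_iff S_add residue_S in blast)+
qed

end

theorem lemma9p6:
  fixes n :: nat
    and iA :: "'k::field \<Rightarrow> 'a::comm_ring_1"
    and iB :: "'k \<Rightarrow> 'b::ring_1"
    and t :: 'b
    and theta :: "(nat \<Rightarrow> 'b set) \<Rightarrow> (nat \<Rightarrow> 'a)"
    and s :: "('a \<Rightarrow> 'a) \<Rightarrow> ('b \<Rightarrow> 'b)"
  assumes A_alg: "ring_hom_fun iA"
    and B_alg: "kn_algebra n iB t"
    and iso: "gr_iso n iA iB t theta"
    and deform: "induces_deformation n iB t"
    and s_hom: "kalg_hom iA iB t s"
    and s_sect: "\<forall>d\<in>DA iA. tau t theta (s d) = d"
  shows "(\<forall>x y. residue t theta (x + y) = residue t theta x + residue t theta y)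
       \<and> (\<forall>a b. residue t theta (s (\<lambda>x. a * x) b) = a * residue t theta b)
       \<and> (\<exists>e. bij_betw (\<lambda>p. bmod n t s p e) (akn n) UNIV)"
proof -
  interpret kn_algebra_with_gr_iso n iA iB t theta
    using B_alg iso by unfold_locales
  have residue_s: "residue t theta (s (\<lambda>x. a * x) b) = a * residue t theta b" for a b
    using residue_mult_section[OF s_hom s_sect] .
  define S where "S a = s (\<lambda>x. a * x) 1" for a
  have "bij_betw (tpow_expansion n t S) (akn n) UNIV"
  proof (rule tpow_expansion_bij_of_section)
    show "S (a + b) = S a + S b" for a b unfolding S_def using kalg_hom_mult_add[OF s_hom] .
    show "residue t theta (S a) = a" for a unfolding S_def using residue_s residue_one by simp
  qed
  moreover have "(\<lambda>p. bmod n t s p 1) = tpow_expansion n t S"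
    unfolding bmod_def tpow_expansion_def S_def by simp
  ultimately have "bij_betw (\<lambda>p. bmod n t s p 1) (akn n) UNIV" by simp
  then show ?thesis using residue_add residue_s by blast
qed

end
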